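(* Let $(X,\mathrm{d})$ be a compact metric space and let $f\colon X\to X$ be a bi-Lipschitz homeomorphism such that $\mathrm{d}$ is $f$-hyperbolic. Then $f$ is $\mathrm{d}_W$-robustly expansive: there are $\epsilon,\delta>0$ such that every bi-Lipschitz homeomorphism $g\colon X\to X$ with $\mathrm{d}_W(f,g)<\epsilon$ is expansive with expansive constant $\delta$.
   Context: A homeomorphism $g$ of a compact metric space $(X,\mathrm{d})$ is expansive with expansive constant $\delta>0$ if $\mathrm{d}(g^n(x),g^n(y))\le\delta$ for all $n\in\mathbb Z$ implies $x=y$. A metric $\mathrm{d}$ defining the topology of $X$ is $f$-hyperbolic if there are $\delta>0$ and $\lambda>1$ such that $\mathrm{d}(x,y)<\delta$ implies $\max\{\mathrm{d}(f(x),f(y)),\mathrm{d}(f^{-1}(x),f^{-1}(y))\}\ge\lambda\,\mathrm{d}(x,y)$. For homeomorphisms $f,g$ of $X$, $\mathrm{d}_{C^0}(f,g)=\max_{x}\mathrm{d}(f(x),g(x))+\max_x\mathrm{d}(f^{-1}(x),g^{-1}(x))$. For Lipschitz maps, $\mathrm{d}'_W(f,g)=\sup_{x\ne y}\frac{|\mathrm{d}(f(x),f(y))-\mathrm{d}(g(x),g(y))|}{\mathrm{d}(x,y)}$, and for bi-Lipschitz homeomorphisms $\mathrm{d}_W(f,g)=\mathrm{d}_{C^0}(f,g)+\mathrm{d}'_W(f,g)+\mathrm{d}'_W(f^{-1},g^{-1})$. *)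

theory Defs
  imports "HOL-Analysis.Analysis"
begin

(* The space X is a subset of a metric space type, with the induced metric dist.
   A homeomorphism of X is given together with its inverse. *)

definition bilip_homeo :: "'a::metric_space set \<Rightarrow> ('a \<Rightarrow> 'a) \<Rightarrow> ('a \<Rightarrow> 'a) \<Rightarrow> bool" where
  "bilip_homeo X f finv \<longleftrightarrow> homeomorphism X X f finv \<and>
     (\<exists>L. L-lipschitz_on X f) \<and> (\<exists>L. L-lipschitz_on X finv)"

definition iter_int :: "('a \<Rightarrow> 'a) \<Rightarrow> ('a \<Rightarrow> 'a) \<Rightarrow> int \<Rightarrow> 'a \<Rightarrow> 'a" where
  "iter_int g ginv n = (if 0 \<le> n then (g ^^ nat n) else (ginv ^^ nat (- n)))"

definition expansive_with :: "'a::metric_space set \<Rightarrow> ('a \<Rightarrow> 'a) \<Rightarrow> ('a \<Rightarrow> 'a) \<Rightarrow> real \<Rightarrow> bool" where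
  "expansive_with X g ginv \<delta> \<longleftrightarrow> (\<forall>x\<in>X. \<forall>y\<in>X.
      (\<forall>n::int. dist (iter_int g ginv n x) (iter_int g ginv n y) \<le> \<delta>) \<longrightarrow> x = y)"

definition f_hyperbolic :: "'a::metric_space set \<Rightarrow> ('a \<Rightarrow> 'a) \<Rightarrow> ('a \<Rightarrow> 'a) \<Rightarrow> bool" where
  "f_hyperbolic X f finv \<longleftrightarrow> (\<exists>\<delta>>0. \<exists>lam>1. \<forall>x\<in>X. \<forall>y\<in>X. dist x y < \<delta> \<longrightarrow>
      max (dist (f x) (f y)) (dist (finv x) (finv y)) \<ge> lam * dist x y)"

definition d_C0 :: "'a::metric_space set \<Rightarrow> ('a \<Rightarrow> 'a) \<Rightarrow> ('a \<Rightarrow> 'a) \<Rightarrow> ('a \<Rightarrow> 'a) \<Rightarrow> ('a \<Rightarrow> 'a) \<Rightarrow> real" where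
  "d_C0 X f finv g ginv = (SUP x\<in>X. dist (f x) (g x)) + (SUP x\<in>X. dist (finv x) (ginv x))"

definition d_W' :: "'a::metric_space set \<Rightarrow> ('a \<Rightarrow> 'a) \<Rightarrow> ('a \<Rightarrow> 'a) \<Rightarrow> real" where
  "d_W' X f g = (SUP p\<in>{(x,y). x \<in> X \<and> y \<in> X \<and> x \<noteq> y}.
      \<bar>dist (f (fst p)) (f (snd p)) - dist (g (fst p)) (g (snd p))\<bar> / dist (fst p) (snd p))"

definition d_W :: "'a::metric_space set \<Rightarrow> ('a \<Rightarrow> 'a) \<Rightarrow> ('a \<Rightarrow> 'a) \<Rightarrow> ('a \<Rightarrow> 'a) \<Rightarrow> ('a \<Rightarrow> 'a) \<Rightarrow> real" where
  "d_W X f finv g ginv = d_C0 X f finv g ginv + d_W' X f g + d_W' X finv ginv"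

end

theory Submission
  imports Defs
begin

(* Hyperbolicity of d is a quantitative statement: on pairs at distance < \<delta>,
   one of h, h\<^sup>-\<^sup>1 stretches distances by a factor \<mu> > 1 (predicate hyperbolic_on).
   (1) Any homeomorphism with this property is expansive with every constant c < \<delta>: if
       two distinct points have orbits staying c-close, one of the two directions expands
       at the first step, and then expansion propagates along the whole half-orbit, so the
       distances grow like \<mu>^k and eventually exceed c.
   (2) The first-order part d_W' of the Whitney-type distance controls exactly the change of
       distances: |d(fx,fy) - d(gx,gy)| \<le> d_W'(f,g) d(x,y).  Hence if d_W(f,g) < \<epsilon>,
       hyperbolicity with factor \<lambda> for f passes to g with factor \<lambda> - \<epsilon>.
   Taking \<epsilon> = (\<lambda>-1)/2 keeps the factor > 1 and (1) gives the expansive constant \<delta>/2. *)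

definition hyperbolic_on :: "'a::metric_space set \<Rightarrow> ('a \<Rightarrow> 'a) \<Rightarrow> ('a \<Rightarrow> 'a) \<Rightarrow> real \<Rightarrow> real \<Rightarrow> bool" where
  "hyperbolic_on X h hinv \<delta> \<mu> \<longleftrightarrow> (\<forall>u\<in>X. \<forall>v\<in>X. dist u v < \<delta> \<longrightarrow>
      \<mu> * dist u v \<le> max (dist (h u) (h v)) (dist (hinv u) (hinv v)))"

lemma hyperbolic_on_swap:
  "hyperbolic_on X h hinv \<delta> \<mu> \<Longrightarrow> hyperbolic_on X hinv h \<delta> \<mu>"
  unfolding hyperbolic_on_def by (simp add: max.commute)

lemma f_hyperbolic_iff:
  "f_hyperbolic X f finv \<longleftrightarrow> (\<exists>\<delta>>0. \<exists>lam>1. hyperbolic_on X f finv \<delta> lam)"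
  unfolding f_hyperbolic_def hyperbolic_on_def by blast

lemma iter_int_nonneg [simp]: "iter_int g ginv (int k) = g ^^ k"
  by (simp add: iter_int_def)

lemma iter_int_neg [simp]: "iter_int g ginv (- int k) = ginv ^^ k"
  by (cases k) (auto simp: iter_int_def nat_add_distrib)

text \<open>Once the first step of a half-orbit of two distinct points expands, every later step
  expands as well, as long as the orbit stays below the scale \<delta>: the inverse direction
  cannot be the expanding one, because it undoes an expansion.\<close>

lemma expansion_propagates:
  fixes h hinv :: "'a::metric_space \<Rightarrow> 'a"
  assumes hyp: "hyperbolic_on X h hinv \<delta> \<mu>" and mu: "\<mu> > 1"
    and maps: "\<forall>z\<in>X. h z \<in> X" and left_inv: "\<forall>z\<in>X. hinv (h z) = z"
    and x: "x \<in> X" and y: "y \<in> X"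
    and close: "\<forall>k. dist ((h^^k) x) ((h^^k) y) < \<delta>"
    and pos: "x \<noteq> y" and first: "\<mu> * dist x y \<le> dist (h x) (h y)"
  shows "0 < dist ((h^^k) x) ((h^^k) y) \<and>
         \<mu> * dist ((h^^k) x) ((h^^k) y) \<le> dist ((h^^Suc k) x) ((h^^Suc k) y)"
proof (induction k)
  case 0
  then show ?case using pos first by simp
next
  case (Suc k)
  define b where "b j = dist ((h^^j) x) ((h^^j) y)" for j
  have inX: "(h^^j) x \<in> X" "(h^^j) y \<in> X" for j
    by (induction j) (auto simp: maps x y)
  have IH: "0 < b k" "\<mu> * b k \<le> b (Suc k)" using Suc.IH by (auto simp: b_def)
  have "0 < \<mu> * b k" using IH mu by simp
  then have pos_next: "0 < b (Suc k)" using IH by linarith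
  have undo_step: "hinv ((h^^Suc k) x) = (h^^k) x" "hinv ((h^^Suc k) y) = (h^^k) y"
    using left_inv inX by auto
  have "dist ((h^^Suc k) x) ((h^^Suc k) y) < \<delta>" using close by blast
  then have "\<mu> * b (Suc k) \<le> max (dist (h ((h^^Suc k) x)) (h ((h^^Suc k) y)))
      (dist (hinv ((h^^Suc k) x)) (hinv ((h^^Suc k) y)))"
    using hyp inX unfolding hyperbolic_on_def b_def by blast
  then have "\<mu> * b (Suc k) \<le> max (b (Suc (Suc k))) (b k)"
    unfolding undo_step by (simp add: b_def)
  moreover have "b k < \<mu> * b (Suc k)"
  proof -
    have "b k \<le> \<mu> * b k" "b (Suc k) < \<mu> * b (Suc k)" using IH pos_next mu by simp_all
    then show ?thesis using IH by linarith
  qed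
  ultimately have "\<mu> * b (Suc k) \<le> b (Suc (Suc k))" by linarith
  then show ?case using pos_next by (simp add: b_def)
qed

text \<open>Consequently the distances along the half-orbit grow geometrically, which is
  incompatible with a uniform bound.\<close>

lemma expanding_half_orbit_unbounded:
  fixes h hinv :: "'a::metric_space \<Rightarrow> 'a"
  assumes hyp: "hyperbolic_on X h hinv \<delta> \<mu>" and mu: "\<mu> > 1"
    and maps: "\<forall>z\<in>X. h z \<in> X" and left_inv: "\<forall>z\<in>X. hinv (h z) = z"
    and x: "x \<in> X" and y: "y \<in> X"
    and bound: "\<forall>k. dist ((h^^k) x) ((h^^k) y) \<le> c" and c: "c < \<delta>"
    and pos: "x \<noteq> y" and first: "\<mu> * dist x y \<le> dist (h x) (h y)"
  shows False
proof -
  define b where "b k = dist ((h^^k) x) ((h^^k) y)" for k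
  have close: "\<forall>k. dist ((h^^k) x) ((h^^k) y) < \<delta>"
    using bound c by (meson le_less_trans)
  have step: "\<mu> * b k \<le> b (Suc k)" for k
    using expansion_propagates[OF hyp mu maps left_inv x y close pos first] by (simp add: b_def)
  have geometric: "\<mu>^k * b 0 \<le> b k" for k
  proof (induction k)
    case (Suc k)
    have "\<mu>^Suc k * b 0 \<le> \<mu> * b k" using Suc.IH mu by (simp add: mult.assoc)
    then show ?case using step[of k] by linarith
  qed simp
  have b0: "0 < b 0" using pos by (simp add: b_def)
  obtain k where "c / b 0 < \<mu>^k" using real_arch_pow[OF mu] by blast
  then have "c < \<mu>^k * b 0" using b0 by (simp add: pos_divide_less_eq)
  moreover have "b k \<le> c" using bound by (simp add: b_def)
  ultimately show False using geometric[of k] by linarith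
qed

lemma hyperbolic_imp_expansive:
  fixes g ginv :: "'a::metric_space \<Rightarrow> 'a"
  assumes homeo: "homeomorphism X X g ginv" and hyp: "hyperbolic_on X g ginv \<delta> \<mu>"
    and mu: "\<mu> > 1" and c: "c < \<delta>"
  shows "expansive_with X g ginv c"
  unfolding expansive_with_def
proof (intro ballI impI)
  fix x y assume x: "x \<in> X" and y: "y \<in> X"
    and orbit: "\<forall>n. dist (iter_int g ginv n x) (iter_int g ginv n y) \<le> c"
  have gX: "\<forall>z\<in>X. g z \<in> X" "\<forall>z\<in>X. ginv z \<in> X" "\<forall>z\<in>X. ginv (g z) = z" "\<forall>z\<in>X. g (ginv z) = z"
    using homeo unfolding homeomorphism_def by auto
  have fwd: "\<forall>k. dist ((g^^k) x) ((g^^k) y) \<le> c"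
    using orbit iter_int_nonneg by metis
  have bwd: "\<forall>k. dist ((ginv^^k) x) ((ginv^^k) y) \<le> c"
    using orbit iter_int_neg by metis
  show "x = y"
  proof (rule ccontr)
    assume xy: "x \<noteq> y"
    have "dist x y < \<delta>" using fwd[rule_format, of 0] c by simp
    then have "\<mu> * dist x y \<le> max (dist (g x) (g y)) (dist (ginv x) (ginv y))"
      using hyp x y unfolding hyperbolic_on_def by blast
    then consider "\<mu> * dist x y \<le> dist (g x) (g y)" | "\<mu> * dist x y \<le> dist (ginv x) (ginv y)"
      by linarith
    then show False
    proof cases
      case 1
      show False by (rule expanding_half_orbit_unbounded[OF hyp mu gX(1,3) x y fwd c xy 1])
    next
      case 2
      show False
        by (rule expanding_half_orbit_unbounded[OF hyperbolic_on_swap[OF hyp]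
              mu gX(2,4) x y bwd c xy 2])
    qed
  qed
qed

text \<open>For Lipschitz maps the difference quotients in d_W' are bounded, so each of them is
  dominated by the supremum d_W'.\<close>

lemma d_W'_upper:
  assumes "Lf-lipschitz_on X f" "Lg-lipschitz_on X g" "x \<in> X" "y \<in> X" "x \<noteq> y"
  shows "\<bar>dist (f x) (f y) - dist (g x) (g y)\<bar> / dist x y \<le> d_W' X f g"
proof -
  let ?P = "{(x,y). x \<in> X \<and> y \<in> X \<and> x \<noteq> y}"
  let ?q = "\<lambda>p. \<bar>dist (f (fst p)) (f (snd p)) - dist (g (fst p)) (g (snd p))\<bar> / dist (fst p) (snd p)"
  have "?q p \<le> Lf + Lg" if p: "p \<in> ?P" for p
  proof -
    obtain a b where ab: "p = (a,b)" "a \<in> X" "b \<in> X" "a \<noteq> b" using p by auto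
    have "dist (f a) (f b) \<le> Lf * dist a b" "dist (g a) (g b) \<le> Lg * dist a b"
      using assms(1,2) ab unfolding lipschitz_on_def by blast+
    then have "\<bar>dist (f a) (f b) - dist (g a) (g b)\<bar> \<le> (Lf + Lg) * dist a b"
      by (simp add: algebra_simps abs_le_iff) (smt (verit) zero_le_dist)
    then show ?thesis using ab by (simp add: pos_divide_le_eq)
  qed
  then have "bdd_above (?q ` ?P)" by (rule bdd_aboveI2)
  moreover have "(x,y) \<in> ?P" using assms by auto
  ultimately have "?q (x,y) \<le> (SUP p\<in>?P. ?q p)" by (rule cSUP_upper[rotated])
  then show ?thesis unfolding d_W'_def by simp
qed

lemma dist_change_le_d_W':
  assumes "Lf-lipschitz_on X f" "Lg-lipschitz_on X g" "x \<in> X" "y \<in> X"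
  shows "\<bar>dist (f x) (f y) - dist (g x) (g y)\<bar> \<le> d_W' X f g * dist x y"
  using d_W'_upper[OF assms] by (cases "x = y") (simp_all add: pos_divide_le_eq)

text \<open>Nonnegativity of the summands of d_W; it needs a pair of distinct points (resp. a
  nonempty bounded space), since suprema over empty sets are unspecified.\<close>

lemma d_W'_nonneg:
  assumes "Lf-lipschitz_on X f" "Lg-lipschitz_on X g" "x \<in> X" "y \<in> X" "x \<noteq> y"
  shows "0 \<le> d_W' X f g"
  using d_W'_upper[OF assms] by (meson divide_nonneg_nonneg abs_ge_zero zero_le_dist order_trans)

lemma sup_dist_nonneg:
  fixes f g :: "'a::metric_space \<Rightarrow> 'a"
  assumes "X \<noteq> {}" "bounded X" "\<forall>x\<in>X. f x \<in> X \<and> g x \<in> X"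
  shows "0 \<le> (SUP x\<in>X. dist (f x) (g x))"
proof -
  obtain a e where ae: "\<forall>y\<in>X. dist a y \<le> e" using assms(2) unfolding bounded_def by blast
  have "dist (f x) (g x) \<le> 2 * e" if "x \<in> X" for x
  proof -
    have "dist a (f x) \<le> e" "dist a (g x) \<le> e" using ae assms(3) that by auto
    then show ?thesis using dist_triangle3[of "f x" "g x" a] by linarith
  qed
  then have "bdd_above ((\<lambda>x. dist (f x) (g x)) ` X)" by (intro bdd_aboveI2)
  moreover obtain x0 where "x0 \<in> X" using assms(1) by blast
  ultimately show ?thesis by (intro cSUP_upper2[where x=x0]) auto
qed

text \<open>On a bounded space with two distinct points all summands of d_W are nonnegative, so
  a bound on d_W bounds both first-order terms.\<close>

lemma d_W'_le_d_W:
  assumes "bounded X" "bilip_homeo X f finv" "bilip_homeo X g ginv"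
    and "x \<in> X" "y \<in> X" "x \<noteq> y"
  shows "d_W' X f g \<le> d_W X f finv g ginv" "d_W' X finv ginv \<le> d_W X f finv g ginv"
proof -
  obtain Lf Lfi Lg Lgi where lip: "Lf-lipschitz_on X f" "Lfi-lipschitz_on X finv"
      "Lg-lipschitz_on X g" "Lgi-lipschitz_on X ginv"
    and homeo: "homeomorphism X X f finv" "homeomorphism X X g ginv"
    using assms(2,3) unfolding bilip_homeo_def by blast
  have maps: "\<forall>z\<in>X. f z \<in> X \<and> g z \<in> X" "\<forall>z\<in>X. finv z \<in> X \<and> ginv z \<in> X"
    using homeo unfolding homeomorphism_def by auto
  have "X \<noteq> {}" using assms(4) by blast
  then have "0 \<le> d_C0 X f finv g ginv"
    unfolding d_C0_def using sup_dist_nonneg[OF _ assms(1) maps(1)] sup_dist_nonneg[OF _ assms(1) maps(2)]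
    by simp
  moreover have "0 \<le> d_W' X f g" "0 \<le> d_W' X finv ginv"
    using d_W'_nonneg[OF lip(1,3) assms(4-6)] d_W'_nonneg[OF lip(2,4) assms(4-6)] by simp_all
  ultimately show "d_W' X f g \<le> d_W X f finv g ginv" "d_W' X finv ginv \<le> d_W X f finv g ginv"
    unfolding d_W_def by linarith+
qed

lemma hyperbolic_on_perturb:
  assumes hyp: "hyperbolic_on X f finv \<delta> lam"
    and lip: "Lf-lipschitz_on X f" "Lfi-lipschitz_on X finv"
      "Lg-lipschitz_on X g" "Lgi-lipschitz_on X ginv"
    and small: "d_W' X f g \<le> \<epsilon>" "d_W' X finv ginv \<le> \<epsilon>"
  shows "hyperbolic_on X g ginv \<delta> (lam - \<epsilon>)"
  unfolding hyperbolic_on_def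
proof (intro ballI impI)
  fix u v assume u: "u \<in> X" and v: "v \<in> X" and uv: "dist u v < \<delta>"
  have "\<bar>dist (f u) (f v) - dist (g u) (g v)\<bar> \<le> \<epsilon> * dist u v"
    using dist_change_le_d_W'[OF lip(1,3) u v] mult_right_mono[OF small(1) zero_le_dist[of u v]]
    by linarith
  moreover have "\<bar>dist (finv u) (finv v) - dist (ginv u) (ginv v)\<bar> \<le> \<epsilon> * dist u v"
    using dist_change_le_d_W'[OF lip(2,4) u v] mult_right_mono[OF small(2) zero_le_dist[of u v]]
    by linarith
  moreover have "lam * dist u v \<le> max (dist (f u) (f v)) (dist (finv u) (finv v))"
    using hyp u v uv unfolding hyperbolic_on_def by blast
  ultimately show "(lam - \<epsilon>) * dist u v \<le> max (dist (g u) (g v)) (dist (ginv u) (ginv v))"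
    by (simp add: max_def algebra_simps abs_le_iff split: if_splits)
qed

theorem theorem2:
  fixes X :: "'a::metric_space set" and f finv :: "'a \<Rightarrow> 'a"
  assumes "compact X"
    and "bilip_homeo X f finv"
    and "f_hyperbolic X f finv"
  shows "\<exists>\<epsilon>>0. \<exists>\<delta>>0. \<forall>g ginv. bilip_homeo X g ginv \<and> d_W X f finv g ginv < \<epsilon>
            \<longrightarrow> expansive_with X g ginv \<delta>"
proof -
  obtain \<delta> lam where \<delta>: "\<delta> > 0" and lam: "lam > 1" and hyp: "hyperbolic_on X f finv \<delta> lam"
    using assms(3) unfolding f_hyperbolic_iff by blast
  obtain Lf Lfi where lip_f: "Lf-lipschitz_on X f" "Lfi-lipschitz_on X finv"
    using assms(2) unfolding bilip_homeo_def by blast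
  define \<epsilon> where "\<epsilon> = (lam - 1) / 2"
  have robust: "expansive_with X g ginv (\<delta>/2)"
    if g: "bilip_homeo X g ginv" and close: "d_W X f finv g ginv < \<epsilon>" for g ginv
  proof (cases "\<exists>x\<in>X. \<exists>y\<in>X. x \<noteq> y")
    \<comment> \<open>on a space with at most one point every map is expansive\<close>
    case True
    then obtain x y where xy: "x \<in> X" "y \<in> X" "x \<noteq> y" by blast
    obtain Lg Lgi where lip_g: "Lg-lipschitz_on X g" "Lgi-lipschitz_on X ginv"
      and homeo: "homeomorphism X X g ginv"
      using g unfolding bilip_homeo_def by blast
    note bounds = d_W'_le_d_W[OF compact_imp_bounded[OF assms(1)] assms(2) g xy]
    have "hyperbolic_on X g ginv \<delta> (lam - \<epsilon>)"
      using hyperbolic_on_perturb[OF hyp lip_f lip_g] bounds close by simp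
    moreover have "lam - \<epsilon> > 1" using lam by (simp add: \<epsilon>_def field_simps)
    ultimately show ?thesis using hyperbolic_imp_expansive[OF homeo] \<delta> by simp
  next
    case False
    then show ?thesis unfolding expansive_with_def by blast
  qed
  moreover have "\<epsilon> > 0" using lam by (simp add: \<epsilon>_def)
  ultimately show ?thesis using \<delta> by (intro exI[of _ \<epsilon>] conjI exI[of _ "\<delta>/2"]) auto
qed

end
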